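(* Let $n=7$, let $\mathcal{P}_0=\{p_{135},p_{147},p_{16},p_{23},p_{246},p_{257},p_{367},p_{45}\}$, where $p_{ijk}$ (resp. $p_{ij}$) is declared incident exactly to $l_i,l_j,l_k$ (resp. $l_i,l_j$) among $l_1,\dots,l_7$, and let $\mathcal{A}=\{(i,p)\in\{1,\dots,7\}\times\mathcal{P}_0: p\prec l_i\}$. Let $H$ be the free abelian group with basis $x_1,\dots,x_7$, $A=H^{\mathcal{A}}$, $S_p=\sum_{j:\,p\prec l_j}x_j$. Let $U\subseteq A$ be the subgroup generated by: $a^{(0)}_{i,p}$ for $(i,p)\in\mathcal{A}$, $a^{(0)}_{i,p}(j,q)=\delta_{i,j}\delta_{p,q}x_i$; $a^{(1)}_{i,p}$ for $i\in\{1,\dots,7\}$, $p\in\mathcal{P}_0$, $a^{(1)}_{i,p}(j,q)=\delta_{p,q}x_i$; $a^{(2)}_{i,p_1,p_2}$ for $i\in\{1,\dots,7\}$, $p_1,p_2\in\mathcal{P}_0$ both incident to $l_i$, $a^{(2)}_{i,p_1,p_2}(j,q)=\delta_{i,j}\delta_{p_1,q}S_{p_2}$. Let $B\subseteq A$ be the subgroup of maps $a$ with $a(i,p)=a(i,q)$ whenever $(i,p),(i,q)\in\mathcal{A}$. Let $a_0\in A$ be the map with $a_0(4,p_{45})=x_7-x_6-x_3$, $a_0(2,p_{23})=-x_5$, $a_0(6,p_{246})=-x_7$, and $a_0(i,p)=0$ for all other $(i,p)\in\mathcal{A}$. Then the image of $a_0$ in $W=A/(U+B)$ is non-zero.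
   Context: This is the MacLane configuration $C_8$ (affine plane over $\mathbb{F}_3$ with one point deleted), with lines $l_0,\dots,l_7$ and points $p_{012},p_{034},p_{056},p_{07},p_{135},p_{147},p_{16},p_{23},p_{246},p_{257},p_{367},p_{45}$, where $p_{ijk}$ is incident exactly to $l_i,l_j,l_k$ and $p_{ij}$ exactly to $l_i,l_j$; $\mathcal{P}_0$ is the set of points not on $l_0$. *)

theory Defs
  imports Main "HOL-Library.Function_Algebras"
begin

text \<open>The eight points of P0 (points not on l_0) of the MacLane configuration C_8.\<close>
datatype pt = P135 | P147 | P16 | P23 | P246 | P257 | P367 | P45

fun inc :: "pt \<Rightarrow> nat \<Rightarrow> bool" where
  "inc P135 i = (i \<in> {1,3,5})"
| "inc P147 i = (i \<in> {1,4,7})"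
| "inc P16 i = (i \<in> {1,6})"
| "inc P23 i = (i \<in> {2,3})"
| "inc P246 i = (i \<in> {2,4,6})"
| "inc P257 i = (i \<in> {2,5,7})"
| "inc P367 i = (i \<in> {3,6,7})"
| "inc P45 i = (i \<in> {4,5})"

definition calA :: "(nat \<times> pt) set" where
  "calA = {(i,p). i \<in> {1..7} \<and> inc p i}"

text \<open>H = free abelian group on x_1..x_7, elements are integer coefficient vectors
  (nat \<Rightarrow> int) supported in {1..7}.\<close>
definition Hset :: "(nat \<Rightarrow> int) set" where
  "Hset = {h. \<forall>k. k \<notin> {1..7} \<longrightarrow> h k = 0}"

definition xv :: "nat \<Rightarrow> nat \<Rightarrow> int" where
  "xv i = (\<lambda>k. if k = i then 1 else 0)"

definition S :: "pt \<Rightarrow> nat \<Rightarrow> int" where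
  "S p = (\<Sum>j\<in>{j \<in> {1..7}. inc p j}. xv j)"

text \<open>A = H^calA: maps (i,p) \<mapsto> element of H, represented as functions vanishing outside calA.\<close>
type_synonym elemA = "nat \<Rightarrow> pt \<Rightarrow> nat \<Rightarrow> int"

definition Aset :: "elemA set" where
  "Aset = {a. (\<forall>i p. (i,p) \<in> calA \<longrightarrow> a i p \<in> Hset) \<and> (\<forall>i p. (i,p) \<notin> calA \<longrightarrow> a i p = 0)}"

definition add_subgroup :: "'a::ab_group_add set \<Rightarrow> bool" where
  "add_subgroup G \<longleftrightarrow> 0 \<in> G \<and> (\<forall>x\<in>G. \<forall>y\<in>G. x - y \<in> G)"

definition gen_subgroup :: "'a::ab_group_add set \<Rightarrow> 'a set" where
  "gen_subgroup X = \<Inter>{G. add_subgroup G \<and> X \<subseteq> G}"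

definition gen0 :: "nat \<Rightarrow> pt \<Rightarrow> elemA" where
  "gen0 i p = (\<lambda>j q. if j = i \<and> q = p then xv i else 0)"

definition gen1 :: "nat \<Rightarrow> pt \<Rightarrow> elemA" where
  "gen1 i p = (\<lambda>j q. if (j,q) \<in> calA \<and> q = p then xv i else 0)"

definition gen2 :: "nat \<Rightarrow> pt \<Rightarrow> pt \<Rightarrow> elemA" where
  "gen2 i p1 p2 = (\<lambda>j q. if j = i \<and> q = p1 then S p2 else 0)"

definition Ugens :: "elemA set" where
  "Ugens = {gen0 i p | i p. (i,p) \<in> calA}
         \<union> {gen1 i p | i p. i \<in> {1..7}}
         \<union> {gen2 i p1 p2 | i p1 p2. i \<in> {1..7} \<and> inc p1 i \<and> inc p2 i}"

definition U :: "elemA set" where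
  "U = gen_subgroup Ugens"

definition B :: "elemA set" where
  "B = {a \<in> Aset. \<forall>i p q. (i,p) \<in> calA \<and> (i,q) \<in> calA \<longrightarrow> a i p = a i q}"

definition a0 :: elemA where
  "a0 = (\<lambda>i p. if (i,p) = (4,P45) then xv 7 - xv 6 - xv 3
              else if (i,p) = (2,P23) then - xv 5
              else if (i,p) = (6,P246) then - xv 7
              else 0)"

end

theory Submission
  imports Defs
begin

text \<open>
  We exhibit a homomorphism \<open>\<phi> : A \<rightarrow> \<int>\<close> with \<open>\<phi>(B) = 0\<close>, \<open>\<phi>(U) \<subseteq> 3\<int>\<close> and \<open>\<phi>(a\<^sub>0) = 1\<close>;
  hence \<open>a\<^sub>0\<close> is not even in \<open>U + B + 3A\<close>. The functional \<open>\<phi>\<close> is a sum of terms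
  \<open>\<langle>w, a(i,p) - a(i,q)\<rangle>\<close> for six pairs of points \<open>p, q\<close> on a common line \<open>l\<^sub>i\<close>, which is
  why it kills \<open>B\<close>. The weights are chosen so that \<open>\<phi>\<close> vanishes on all generators
  \<open>a\<^sup>(\<^sup>0\<^sup>)\<close> and \<open>a\<^sup>(\<^sup>2\<^sup>)\<close>, while \<open>\<phi>(a\<^sup>(\<^sup>1\<^sup>)\<^sub>i\<^sub>,\<^sub>p) \<in> 3\<int>\<close>.
\<close>

lemma gen_subgroup_least:
  assumes "add_subgroup G" and "X \<subseteq> G"
  shows "gen_subgroup X \<subseteq> G"
  using assms unfolding gen_subgroup_def by blast

lemma gen_subgroup_dvd:
  fixes f :: "'a::ab_group_add \<Rightarrow> int"
  assumes f_diff: "\<And>x y. f (x - y) = f x - f y"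
    and gens: "\<And>x. x \<in> X \<Longrightarrow> m dvd f x"
    and u: "u \<in> gen_subgroup X"
  shows "m dvd f u"
proof -
  have "f 0 = 0"
    using f_diff[of 0 0] by simp
  then have "add_subgroup {x. m dvd f x}"
    unfolding add_subgroup_def by (simp add: f_diff)
  with gens have "gen_subgroup X \<subseteq> {x. m dvd f x}"
    by (intro gen_subgroup_least) auto
  with u show ?thesis
    by blast
qed

lemma line_index_cases:
  assumes "i \<in> {1..7::nat}"
  obtains "i = 1" | "i = 2" | "i = 3" | "i = 4" | "i = 5" | "i = 6" | "i = 7"
  using assms by fastforce

definition dot :: "(nat \<Rightarrow> int) \<Rightarrow> (nat \<Rightarrow> int) \<Rightarrow> int" where
  "dot w h = (\<Sum>k=1..7. w k * h k)"

lemma dot_diff: "dot w (h - h') = dot w h - dot w h'"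
  unfolding dot_def by (simp add: algebra_simps sum_subtractf)

lemma dot_uminus: "dot w (- h) = - dot w h"
  unfolding dot_def by (simp add: sum_negf)

lemma dot_zero: "dot w 0 = 0"
  by (simp add: dot_def)

lemma dot_xv: "k \<in> {1..7} \<Longrightarrow> dot w (xv k) = w k"
  by (simp add: dot_def xv_def if_distrib[of "times _"] sum.delta' cong: if_cong)

lemma dot_expand:
  "dot w h = w 1 * h 1 + w 2 * h 2 + w 3 * h 3 + w 4 * h 4 + w 5 * h 5 + w 6 * h 6 + w 7 * h 7"
  unfolding dot_def by (simp add: numeral_eq_Suc)

lemma S_apply: "S p k = (if k \<in> {1..7} \<and> inc p k then 1 else 0)"
proof -
  have "S p k = (\<Sum>j\<in>{j \<in> {1..7}. inc p j}. xv j k)"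
    unfolding S_def by (induct rule: infinite_finite_induct) auto
  also have "\<dots> = (\<Sum>j\<in>{j \<in> {1..7}. inc p j}. if k = j then 1 else 0)"
    by (simp add: xv_def eq_commute)
  finally show ?thesis
    by (simp add: sum.delta')
qed

definition line_diff_functional :: "(nat \<times> pt \<times> pt \<times> (nat \<Rightarrow> int)) list \<Rightarrow> elemA \<Rightarrow> int" where
  "line_diff_functional L a = (\<Sum>(i, p, q, w)\<leftarrow>L. dot w (a i p - a i q))"

lemma line_diff_functional_diff:
  "line_diff_functional L (a - a') = line_diff_functional L a - line_diff_functional L a'"
proof -
  have "(a - a') i p - (a - a') i q = (a i p - a i q) - (a' i p - a' i q)" for i p q
    by (simp add: algebra_simps)
  then show ?thesis
    unfolding line_diff_functional_def by (induct L) (auto simp: dot_diff)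
qed

lemma line_diff_functional_add:
  "line_diff_functional L (a + a') = line_diff_functional L a + line_diff_functional L a'"
  by (metis add_diff_cancel diff_add_cancel line_diff_functional_diff)

lemma line_diff_functional_B:
  assumes L: "\<forall>(i, p, q, w) \<in> set L. (i, p) \<in> calA \<and> (i, q) \<in> calA" and b: "b \<in> B"
  shows "line_diff_functional L b = 0"
proof -
  have term_zero: "dot w (b i p - b i q) = 0" if "(i, p, q, w) \<in> set L" for i p q w
  proof -
    from L that have "(i, p) \<in> calA" "(i, q) \<in> calA"
      by auto
    with b have "b i p = b i q"
      unfolding B_def by blast
    then show ?thesis
      by (simp add: dot_def)
  qed
  have "map (\<lambda>(i, p, q, w). dot w (b i p - b i q)) L = map (\<lambda>_. 0) L"
    by (rule map_cong) (auto simp: term_zero)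
  then show ?thesis
    unfolding line_diff_functional_def by (metis sum_list_0)
qed

definition w\<^sub>1 :: "nat \<Rightarrow> int" where "w\<^sub>1 = xv 2 - xv 3 - xv 4 + xv 5 + xv 7"
definition w\<^sub>2 :: "nat \<Rightarrow> int" where "w\<^sub>2 = xv 1 + xv 4 - xv 5 - xv 6 + xv 7"
definition w\<^sub>4 :: "nat \<Rightarrow> int" where "w\<^sub>4 = xv 1 + xv 2 - xv 3 - xv 6 - xv 7"

definition phi_terms :: "(nat \<times> pt \<times> pt \<times> (nat \<Rightarrow> int)) list" where
  "phi_terms =
    [(1, P135, P16, w\<^sub>1), (2, P23, P246, w\<^sub>2), (3, P135, P23, w\<^sub>2),
     (4, P246, P45, w\<^sub>4), (5, P135, P45, - w\<^sub>4), (6, P16, P246, w\<^sub>1)]"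

definition phi :: "elemA \<Rightarrow> int" where
  "phi = line_diff_functional phi_terms"

lemma phi_eq:
  "phi a = dot w\<^sub>1 (a 1 P135 - a 1 P16) + dot w\<^sub>2 (a 2 P23 - a 2 P246) + dot w\<^sub>2 (a 3 P135 - a 3 P23)
    + dot w\<^sub>4 (a 4 P246 - a 4 P45) - dot w\<^sub>4 (a 5 P135 - a 5 P45) + dot w\<^sub>1 (a 6 P16 - a 6 P246)"
  unfolding phi_def phi_terms_def line_diff_functional_def by (simp add: dot_def sum_negf)

lemma weights_apply:
  "w\<^sub>1 k = (if k \<in> {2, 5, 7} then 1 else if k \<in> {3, 4} then -1 else 0)"
  "w\<^sub>2 k = (if k \<in> {1, 4, 7} then 1 else if k \<in> {5, 6} then -1 else 0)"
  "w\<^sub>4 k = (if k \<in> {1, 2} then 1 else if k \<in> {3, 6, 7} then -1 else 0)"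
  by (simp_all add: w\<^sub>1_def w\<^sub>2_def w\<^sub>4_def xv_def)

lemmas phi_eval = phi_eq dot_zero dot_uminus dot_diff dot_xv weights_apply

lemma phi_diff: "phi (a - a') = phi a - phi a'"
  unfolding phi_def by (rule line_diff_functional_diff)

lemma phi_add: "phi (a + a') = phi a + phi a'"
  unfolding phi_def by (rule line_diff_functional_add)

lemma phi_B: "b \<in> B \<Longrightarrow> phi b = 0"
  unfolding phi_def by (rule line_diff_functional_B) (auto simp: phi_terms_def calA_def)

lemma phi_gen0: "inc p i \<Longrightarrow> phi (gen0 i p) = 0"
  by (cases p) (auto simp: phi_eval gen0_def)

lemma phi_gen1: "i \<in> {1..7} \<Longrightarrow> 3 dvd phi (gen1 i p)"
  by (erule line_index_cases; cases p) (simp_all add: phi_eval gen1_def calA_def)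

lemma phi_gen2: "inc p1 i \<Longrightarrow> inc p2 i \<Longrightarrow> phi (gen2 i p1 p2) = 0"
  by (cases p1; cases p2) (auto simp: phi_eq gen2_def dot_expand S_apply weights_apply)

lemma phi_U: "u \<in> U \<Longrightarrow> 3 dvd phi u"
  unfolding U_def
proof (rule gen_subgroup_dvd[where f = phi])
  show "3 dvd phi x" if "x \<in> Ugens" for x
    using that phi_gen0 phi_gen1 phi_gen2 unfolding Ugens_def calA_def by auto
qed (rule phi_diff)

lemma phi_a0: "phi a0 = 1"
  by (simp add: phi_eval a0_def)

theorem lemma3p2:
  shows "a0 \<notin> {u + b | u b. u \<in> U \<and> b \<in> B}"
proof
  assume "a0 \<in> {u + b | u b. u \<in> U \<and> b \<in> B}"
  then obtain u b where decomp: "a0 = u + b" and "u \<in> U" "b \<in> B"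
    by blast
  have "phi a0 = phi u + phi b"
    unfolding decomp by (rule phi_add)
  also have "\<dots> = phi u"
    using \<open>b \<in> B\<close> by (simp add: phi_B)
  finally have "3 dvd phi a0"
    using phi_U[OF \<open>u \<in> U\<close>] by simp
  then show False
    by (simp add: phi_a0)
qed

end
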